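(* Let $G=(X,Y;E)$ be a bipartite graph with $n$ vertices and let $M\subseteq E$ be a matching of $G$. Then $M$ is a perfect matching of $G$ that is uniquely restricted if and only if the $BD$-mapping digraph $D(G,M)$ is acyclic and has exactly $n/2$ vertices.
   Context: A matching $M$ is uniquely restricted if the subgraph of $G$ induced by the vertices saturated by $M$ has a unique perfect matching (namely $M$). For each edge of $M$ write it as $(x,x')$ with $x\in X$, $x'\in Y$; $x'$ is called the partner of $x$. The $BD$-mapping digraph $D(G,M)=(V,A)$ has vertex set $V=\{x\in X : (x,x')\in M \text{ for some } x'\}$ and arc set $A=\{\langle x_1,x_2\rangle : x_1,x_2\in V,\ (x_1,x_2')\in E\setminus M\}$, where $x_2'$ is the partner of $x_2$. $|D(G,M)|$ denotes the number of vertices of $D(G,M)$. *)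

theory Defs
  imports Main
begin

definition bipartite_graph :: "'a set \<Rightarrow> 'a set \<Rightarrow> ('a \<times> 'a) set \<Rightarrow> bool" where
  "bipartite_graph X Y E \<longleftrightarrow> finite X \<and> finite Y \<and> X \<inter> Y = {} \<and> E \<subseteq> X \<times> Y"

definition Vs :: "('a \<times> 'a) set \<Rightarrow> 'a set" where
  "Vs M = fst ` M \<union> snd ` M"

definition matching_of :: "('a \<times> 'a) set \<Rightarrow> ('a \<times> 'a) set \<Rightarrow> bool" where
  "matching_of E M \<longleftrightarrow> M \<subseteq> E \<and>
     (\<forall>e\<in>M. \<forall>f\<in>M. e \<noteq> f \<longrightarrow> fst e \<noteq> fst f \<and> snd e \<noteq> snd f)"

definition perfect_matching_of :: "'a set \<Rightarrow> ('a \<times> 'a) set \<Rightarrow> ('a \<times> 'a) set \<Rightarrow> bool" where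
  "perfect_matching_of W E M \<longleftrightarrow> matching_of E M \<and> Vs M = W"

definition uniquely_restricted :: "('a \<times> 'a) set \<Rightarrow> ('a \<times> 'a) set \<Rightarrow> bool" where
  "uniquely_restricted E M \<longleftrightarrow> matching_of E M \<and>
     (\<forall>M'. perfect_matching_of (Vs M) (E \<inter> (Vs M \<times> Vs M)) M' \<longrightarrow> M' = M)"

definition BD_vertices :: "'a set \<Rightarrow> ('a \<times> 'a) set \<Rightarrow> 'a set" where
  "BD_vertices X M = {x\<in>X. \<exists>y. (x,y) \<in> M}"

definition BD_arcs :: "'a set \<Rightarrow> ('a \<times> 'a) set \<Rightarrow> ('a \<times> 'a) set \<Rightarrow> ('a \<times> 'a) set" where
  "BD_arcs X E M = {(x1,x2). x1 \<in> BD_vertices X M \<and> x2 \<in> BD_vertices X M \<and>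
      (\<exists>y. (x2,y) \<in> M \<and> (x1,y) \<in> E - M)}"

end

theory Submission
  imports Defs
begin

text \<open>An arc x1 \<rightarrow> x2 of D(G,M) is the non-matching edge (x1, x2') followed by the
  matching edge (x2', x2), so cycles of D(G,M) are M-alternating cycles. If M' is another
  perfect matching of the saturated subgraph, the X-vertices whose M'-edge is not in M form a
  nonempty set in which every vertex has a successor, which forces a cycle. Conversely, a
  cycle yields a permutation \<sigma> of a nonempty vertex set C along arcs, and rematching each
  x \<in> C to the partner of \<sigma> x gives a second perfect matching. Perfectness is a count:
  |Vs M| = 2|D(G,M)|.\<close>

lemma matching_of_iff:
  "matching_of E M \<longleftrightarrow> M \<subseteq> E \<and> (\<forall>(a,b)\<in>M. \<forall>(c,d)\<in>M. a = c \<longleftrightarrow> b = d)"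
  unfolding matching_of_def by fastforce

lemma Vs_left_partner:
  assumes "N \<subseteq> X \<times> Y" "X \<inter> Y = {}" "v \<in> Vs N" "v \<in> X"
  obtains w where "(v, w) \<in> N"
  using assms unfolding Vs_def by force

lemma Vs_right_partner:
  assumes "N \<subseteq> X \<times> Y" "X \<inter> Y = {}" "v \<in> Vs N" "v \<in> Y"
  obtains u where "(u, v) \<in> N"
  using assms unfolding Vs_def by force

lemma fst_in_Vs: "(a, b) \<in> N \<Longrightarrow> a \<in> Vs N"
  and snd_in_Vs: "(a, b) \<in> N \<Longrightarrow> b \<in> Vs N"
  unfolding Vs_def by force+

lemma Vs_subset_Un: "N \<subseteq> A \<times> B \<Longrightarrow> Vs N \<subseteq> A \<union> B"
  unfolding Vs_def by auto

lemma bij_betw_extend_id: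
  assumes "bij_betw \<sigma> C C"
  shows "bij (\<lambda>x. if x \<in> C then \<sigma> x else x)"
proof -
  have "bij_betw (\<lambda>x. if x \<in> C then \<sigma> x else id x) (C \<union> - C) (C \<union> - C)"
    using assms bij_betw_id by (rule bij_betw_disjoint_Un) auto
  then show ?thesis by (simp only: id_apply Compl_partition)
qed

lemma successor_closed_not_acyclic:
  assumes "finite R" "S \<noteq> {}" "\<And>x. x \<in> S \<Longrightarrow> \<exists>y\<in>S. (x, y) \<in> R"
  shows "\<not> acyclic R"
proof
  assume "acyclic R"
  with \<open>finite R\<close> have "wf (R\<inverse>)" by (rule finite_acyclic_wf_converse)
  then obtain z where "z \<in> S" "\<And>y. (y, z) \<in> R\<inverse> \<Longrightarrow> y \<notin> S"
    using \<open>S \<noteq> {}\<close> by (meson ex_in_conv wfE_min)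
  with assms(3) show False by blast
qed

text \<open>A successor-closed set of minimal cardinality is mapped onto itself by any choice of
  successors, which is therefore a permutation.\<close>
lemma not_acyclic_obtains_permutation:
  assumes "finite R" "\<not> acyclic R"
  obtains C \<sigma> where "C \<noteq> {}" "bij_betw \<sigma> C C" "\<And>x. x \<in> C \<Longrightarrow> (x, \<sigma> x) \<in> R"
proof -
  define closed where "closed C \<longleftrightarrow> C \<noteq> {} \<and> (\<forall>x\<in>C. \<exists>y\<in>C. (x, y) \<in> R)" for C
  have "closed {v. (v, v) \<in> R\<^sup>+}"
  proof -
    have "\<exists>w. (w, w) \<in> R\<^sup>+ \<and> (v, w) \<in> R" if "(v, v) \<in> R\<^sup>+" for v
    proof -
      obtain w where "(v, w) \<in> R" "(w, v) \<in> R\<^sup>*" using \<open>(v, v) \<in> R\<^sup>+\<close> by (meson tranclD)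
      then show ?thesis by (blast intro: rtrancl_into_trancl1)
    qed
    moreover have "{v. (v, v) \<in> R\<^sup>+} \<noteq> {}" using \<open>\<not> acyclic R\<close> unfolding acyclic_def by simp
    ultimately show ?thesis unfolding closed_def by blast
  qed
  then obtain C where C: "closed C" and minimal: "\<And>C'. closed C' \<Longrightarrow> card C \<le> card C'"
    using ex_has_least_nat[where m = card] by metis
  have "C \<subseteq> Domain R" using C unfolding closed_def by blast
  then have "finite C" using \<open>finite R\<close> by (meson finite_Domain finite_subset)
  define \<sigma> where "\<sigma> x = (SOME y. y \<in> C \<and> (x, y) \<in> R)" for x
  have \<sigma>: "\<sigma> x \<in> C \<and> (x, \<sigma> x) \<in> R" if "x \<in> C" for x
    using C that unfolding closed_def \<sigma>_def by (metis (mono_tags, lifting) someI_ex)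
  have "closed (\<sigma> ` C)" using C \<sigma> unfolding closed_def by blast
  then have "card C \<le> card (\<sigma> ` C)" by (rule minimal)
  moreover have "\<sigma> ` C \<subseteq> C" using \<sigma> by blast
  ultimately have "\<sigma> ` C = C" using \<open>finite C\<close> by (meson card_seteq)
  then have "bij_betw \<sigma> C C" using \<open>finite C\<close> by (simp add: bij_betw_def eq_card_imp_inj_on)
  then show thesis using C \<sigma> unfolding closed_def by (intro that) auto
qed

locale bipartite_matching =
  fixes X Y :: "'a set" and E M :: "('a \<times> 'a) set"
  assumes bipartite: "bipartite_graph X Y E" and matching: "matching_of E M"
begin

lemma finite_X: "finite X" and finite_Y: "finite Y" and disjoint: "X \<inter> Y = {}"
  and E_subset: "E \<subseteq> X \<times> Y"
  using bipartite unfolding bipartite_graph_def by auto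

lemma M_subset_E: "M \<subseteq> E"
  using matching unfolding matching_of_def by blast

lemma M_subset: "M \<subseteq> X \<times> Y"
  using M_subset_E E_subset by blast

lemma matched_eq_iff: "(a, b) \<in> M \<Longrightarrow> (c, d) \<in> M \<Longrightarrow> a = c \<longleftrightarrow> b = d"
  using matching unfolding matching_of_iff by fast

lemma BD_vertices_eq: "BD_vertices X M = fst ` M"
  using M_subset unfolding BD_vertices_def by force

lemma card_Vs: "card (Vs M) = 2 * card (BD_vertices X M)"
proof -
  have "finite M" using M_subset finite_X finite_Y by (meson finite_SigmaI finite_subset)
  moreover have "fst ` M \<inter> snd ` M = {}" using M_subset disjoint by force
  moreover have "inj_on fst M" "inj_on snd M"
    using matched_eq_iff unfolding inj_on_def by (fastforce, fastforce)
  ultimately show ?thesis unfolding Vs_def BD_vertices_eq by (simp add: card_Un_disjoint card_image)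
qed

lemma perfect_iff_card_BD_vertices:
  "perfect_matching_of (X \<union> Y) E M \<longleftrightarrow> 2 * card (BD_vertices X M) = card (X \<union> Y)"
proof -
  have "Vs M \<subseteq> X \<union> Y" using M_subset by (rule Vs_subset_Un)
  then show ?thesis
    unfolding perfect_matching_of_def card_Vs[symmetric] using matching finite_X finite_Y
    by (metis card_subset_eq finite_Un)
qed

lemma finite_BD_arcs: "finite (BD_arcs X E M)"
proof -
  have "BD_arcs X E M \<subseteq> X \<times> X" unfolding BD_arcs_def BD_vertices_def by blast
  then show ?thesis using finite_X by (meson finite_SigmaI finite_subset)
qed

lemma BD_arc_partner:
  assumes "(x1, x2) \<in> BD_arcs X E M" "(x2, y) \<in> M"
  shows "(x1, y) \<in> E - M"
  using assms matched_eq_iff unfolding BD_arcs_def by blast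

lemma BD_arcs_vertices: "(x1, x2) \<in> BD_arcs X E M \<Longrightarrow> x1 \<in> fst ` M \<and> x2 \<in> fst ` M"
  unfolding BD_arcs_def BD_vertices_eq by blast

lemma new_edges_successor_closed:
  assumes M': "perfect_matching_of (Vs M) (E \<inter> (Vs M \<times> Vs M)) M'"
    and x: "(x, y) \<in> M' - M"
  obtains x2 y2 where "(x2, y2) \<in> M' - M" "(x, x2) \<in> BD_arcs X E M"
proof -
  have M'_sub: "M' \<subseteq> E \<inter> (Vs M \<times> Vs M)" and Vs_M': "Vs M' = Vs M"
    using M' unfolding perfect_matching_of_def matching_of_def by auto
  have matched'_eq_iff: "(a, b) \<in> M' \<Longrightarrow> (c, d) \<in> M' \<Longrightarrow> a = c \<longleftrightarrow> b = d" for a b c d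
    using M' unfolding perfect_matching_of_def matching_of_iff by fast
  have "x \<in> X" "y \<in> Y" "x \<in> Vs M" "y \<in> Vs M" "(x, y) \<in> E"
    using x M'_sub E_subset by auto
  obtain y1 where "(x, y1) \<in> M" using Vs_left_partner[OF M_subset disjoint] \<open>x \<in> Vs M\<close> \<open>x \<in> X\<close> .
  obtain x2 where x2: "(x2, y) \<in> M" using Vs_right_partner[OF M_subset disjoint] \<open>y \<in> Vs M\<close> \<open>y \<in> Y\<close> .
  have "x2 \<in> Vs M" "x2 \<in> X" using fst_in_Vs[OF x2] x2 M_subset by auto
  then obtain y2 where y2: "(x2, y2) \<in> M'"
    using Vs_left_partner[of M' X Y] M'_sub E_subset disjoint Vs_M' by blast
  have "(x2, y2) \<notin> M"
    using x x2 y2 matched_eq_iff[OF x2] matched'_eq_iff[OF y2] by blast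
  moreover have "(x, x2) \<in> BD_arcs X E M"
    unfolding BD_arcs_def BD_vertices_def
    using \<open>x \<in> X\<close> \<open>x2 \<in> X\<close> \<open>(x, y1) \<in> M\<close> x2 x \<open>(x, y) \<in> E\<close> by blast
  ultimately show thesis using that y2 by blast
qed

lemma acyclic_imp_unique:
  assumes "acyclic (BD_arcs X E M)"
    and M': "perfect_matching_of (Vs M) (E \<inter> (Vs M \<times> Vs M)) M'"
  shows "M' = M"
proof -
  have "M' \<subseteq> M"
  proof (rule ccontr)
    let ?S = "fst ` (M' - M)"
    assume "\<not> M' \<subseteq> M"
    then have "?S \<noteq> {}" by blast
    moreover have "\<exists>x2\<in>?S. (x, x2) \<in> BD_arcs X E M" if "x \<in> ?S" for x
    proof -
      from that obtain y where "(x, y) \<in> M' - M" by force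
      then obtain x2 y2 where "(x2, y2) \<in> M' - M" "(x, x2) \<in> BD_arcs X E M"
        by (rule new_edges_successor_closed[OF M'])
      then show ?thesis by force
    qed
    ultimately show False
      using successor_closed_not_acyclic[OF finite_BD_arcs, of ?S] assms(1) by blast
  qed
  moreover have "M \<subseteq> M'"
  proof
    fix p assume "p \<in> M"
    then obtain a b where p: "p = (a, b)" "(a, b) \<in> M" by (cases p) auto
    have "M' \<subseteq> X \<times> Y"
      using M' E_subset unfolding perfect_matching_of_def matching_of_def by blast
    moreover have "a \<in> Vs M'"
      using fst_in_Vs[OF p(2)] M' unfolding perfect_matching_of_def by simp
    moreover have "a \<in> X" using p(2) M_subset by blast
    ultimately obtain b' where b': "(a, b') \<in> M'" using Vs_left_partner disjoint by metis
    with \<open>M' \<subseteq> M\<close> have "b' = b" using matched_eq_iff[OF p(2), of a b'] by blast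
    with b' p show "p \<in> M'" by simp
  qed
  ultimately show ?thesis by blast
qed

lemma rotate_along_permutation:
  assumes "C \<noteq> {}" "bij_betw \<sigma> C C" and arcs: "\<And>x. x \<in> C \<Longrightarrow> (x, \<sigma> x) \<in> BD_arcs X E M"
  defines "\<rho> \<equiv> \<lambda>x. if x \<in> C then \<sigma> x else x"
  defines "M' \<equiv> {(x, y). (\<rho> x, y) \<in> M}"
  shows "perfect_matching_of (Vs M) (E \<inter> (Vs M \<times> Vs M)) M'" and "M' \<noteq> M"
proof -
  have "bij \<rho>" unfolding \<rho>_def using \<open>bij_betw \<sigma> C C\<close> by (rule bij_betw_extend_id)
  have partner: "\<exists>y. (x, y) \<in> M" if "x \<in> C" for x
    using BD_arcs_vertices[OF arcs[OF that]] by force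
  have rotated: "(x, y) \<in> E - M" if "x \<in> C" "(\<sigma> x, y) \<in> M" for x y
    using that arcs BD_arc_partner by blast
  have sub: "(x, y) \<in> E \<inter> (Vs M \<times> Vs M)" if "(\<rho> x, y) \<in> M" for x y
  proof (cases "x \<in> C")
    case True
    with that have "(\<sigma> x, y) \<in> M" unfolding \<rho>_def by simp
    moreover obtain y' where "(x, y') \<in> M" using partner True by blast
    ultimately show ?thesis using rotated True fst_in_Vs[of x y' M] snd_in_Vs[of "\<sigma> x" y M] by blast
  next
    case False
    with that have "(x, y) \<in> M" unfolding \<rho>_def by simp
    then show ?thesis using M_subset_E fst_in_Vs[of x y M] snd_in_Vs[of x y M] by blast
  qed
  have "a = c \<longleftrightarrow> b = d" if "(\<rho> a, b) \<in> M" "(\<rho> c, d) \<in> M" for a b c d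
    using matched_eq_iff[OF that] bij_is_inj[OF \<open>bij \<rho>\<close>] by (simp add: inj_eq)
  with sub have "matching_of (E \<inter> (Vs M \<times> Vs M)) M'"
    unfolding matching_of_iff M'_def by blast
  moreover have "Vs M \<subseteq> Vs M'"
  proof
    fix v assume "v \<in> Vs M"
    then obtain a b where ab: "(a, b) \<in> M" "v = a \<or> v = b" unfolding Vs_def by force
    have "(inv \<rho> a, b) \<in> M'"
      using ab \<open>bij \<rho>\<close> unfolding M'_def by (simp add: bij_is_surj surj_f_inv_f)
    moreover have "\<exists>y. (\<rho> a, y) \<in> M"
      using partner[of "\<sigma> a"] ab bij_betwE[OF \<open>bij_betw \<sigma> C C\<close>] unfolding \<rho>_def by auto
    then obtain y where "(a, y) \<in> M'" unfolding M'_def by blast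
    ultimately show "v \<in> Vs M'" using ab(2) fst_in_Vs snd_in_Vs by metis
  qed
  moreover have "Vs M' \<subseteq> Vs M"
    using sub by (intro Vs_subset_Un[where A = "Vs M" and B = "Vs M", simplified]) (auto simp: M'_def)
  ultimately show "perfect_matching_of (Vs M) (E \<inter> (Vs M \<times> Vs M)) M'"
    unfolding perfect_matching_of_def by blast
  obtain x where "x \<in> C" using \<open>C \<noteq> {}\<close> by blast
  then obtain y where "(\<sigma> x, y) \<in> M" using partner bij_betwE[OF \<open>bij_betw \<sigma> C C\<close>] by blast
  with \<open>x \<in> C\<close> have "(x, y) \<in> M' - M" using rotated unfolding M'_def \<rho>_def by simp
  then show "M' \<noteq> M" by blast
qed

lemma uniquely_restricted_iff_acyclic:
  "uniquely_restricted E M \<longleftrightarrow> acyclic (BD_arcs X E M)"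
proof
  assume unique: "uniquely_restricted E M"
  show "acyclic (BD_arcs X E M)"
  proof (rule ccontr)
    assume "\<not> acyclic (BD_arcs X E M)"
    then obtain C \<sigma> where "C \<noteq> {}" "bij_betw \<sigma> C C" "\<And>x. x \<in> C \<Longrightarrow> (x, \<sigma> x) \<in> BD_arcs X E M"
      using not_acyclic_obtains_permutation finite_BD_arcs by metis
    from rotate_along_permutation[OF this] unique show False
      unfolding uniquely_restricted_def by blast
  qed
next
  assume "acyclic (BD_arcs X E M)"
  then show "uniquely_restricted E M"
    using acyclic_imp_unique matching unfolding uniquely_restricted_def by blast
qed

end

theorem theorem7:
  fixes X Y :: "'a set" and E M :: "('a \<times> 'a) set"
  assumes "bipartite_graph X Y E"
    and "matching_of E M"
  shows "(perfect_matching_of (X \<union> Y) E M \<and> uniquely_restricted E M) \<longleftrightarrow>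
         (acyclic (BD_arcs X E M) \<and> 2 * card (BD_vertices X M) = card (X \<union> Y))"
proof -
  interpret bipartite_matching X Y E M using assms by unfold_locales
  show ?thesis using perfect_iff_card_BD_vertices uniquely_restricted_iff_acyclic by blast
qed

end
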